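(* For conjunctive guarded systems of type $(A,B)$: for all $n\ge1$, if $(A,B)^{(1,n)}$ has a deadlock then $(A,B)^{(1,n+1)}$ has a deadlock.
   Context: A process template is $U=(Q_U,\mathit{init}_U,\Sigma_U,\delta_U)$ with finite states $Q_U$, initial state $\mathit{init}_U$, finite input alphabet $\Sigma_U$ and guarded transitions $\delta_U\subseteq Q_U\times\Sigma_U\times 2^{Q_A\cup Q_B}\times Q_U$; templates $A,B$ have disjoint state sets and disjoint alphabets. The system $(A,B)^{(1,n)}$ consists of one copy of $A$ and $n$ copies $B_1,\dots,B_n$ of $B$; a global state $s$ gives each process a local state, a global input $e$ gives each process an input letter, and initially all processes are in their initial states. In a conjunctive system a guard $g$ is satisfied for process $p$ in $s$ iff every process $p'\ne p$ has $s(p')\in g$, and $\mathit{init}_A,\mathit{init}_B$ belong to every guard. A local transition $(q,\sigma,g,q')$ of $p$ is enabled for $(s,e)$ if $s(p)=q$, $e(p)=\sigma$ and $g$ is satisfied for $p$ in $s$; a process is enabled if one of its transitions is; a global step changes the state of exactly one process along an enabled transition. A path is a sequence of configurations $(s_1,e_1,p_1),(s_2,e_2,p_2),\dots$ where $p_t$ makes the step from $s_t$ to $s_{t+1}$ under $e_t$, a configuration $(s,e,\bot)$ occurs (as the last one) exactly when all processes are disabled, and $e_{t+1}(p)=e_t(p)$ for every process $p$ not moving at moment $t$. A run is a maximal path from the initial state. A run is globally deadlocked if it is finite; an infinite run is locally deadlocked if some process is disabled at all moments from some moment on; a system has a deadlock if it has a globally or locally deadlocked run. *)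

theory Defs
  imports Main
begin

record ('q, 's) template =
  states :: "'q set"
  init :: 'q
  alpha :: "'s set"
  delta :: "('q \<times> 's \<times> 'q set \<times> 'q) set"

definition wf_template :: "('q, 's) template \<Rightarrow> 'q set \<Rightarrow> bool" where
  "wf_template U QAB \<longleftrightarrow> finite (states U) \<and> init U \<in> states U \<and> finite (alpha U) \<and>
     delta U \<subseteq> states U \<times> alpha U \<times> Pow QAB \<times> states U"

definition conj_system_type :: "('q, 's) template \<Rightarrow> ('q, 's) template \<Rightarrow> bool" where
  "conj_system_type A B \<longleftrightarrow>
     states A \<inter> states B = {} \<and> alpha A \<inter> alpha B = {} \<and>
     wf_template A (states A \<union> states B) \<and> wf_template B (states A \<union> states B) \<and>
     (\<forall>q \<sigma> g q'. (q, \<sigma>, g, q') \<in> delta A \<union> delta B \<longrightarrow> init A \<in> g \<and> init B \<in> g)"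

text \<open>In (A,B)^(1,n) the processes are 0 (the copy of A) and 1..n (the copies of B).\<close>
definition procs :: "nat \<Rightarrow> nat set" where
  "procs n = {0..n}"

definition tmpl :: "('q, 's) template \<Rightarrow> ('q, 's) template \<Rightarrow> nat \<Rightarrow> ('q, 's) template" where
  "tmpl A B p = (if p = 0 then A else B)"

definition guard_sat :: "nat \<Rightarrow> 'q set \<Rightarrow> nat \<Rightarrow> (nat \<Rightarrow> 'q) \<Rightarrow> bool" where
  "guard_sat n g p s \<longleftrightarrow> (\<forall>p'\<in>procs n. p' \<noteq> p \<longrightarrow> s p' \<in> g)"

definition trans_enabled ::
  "('q, 's) template \<Rightarrow> ('q, 's) template \<Rightarrow> nat \<Rightarrow> nat \<Rightarrow> ('q \<times> 's \<times> 'q set \<times> 'q)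
     \<Rightarrow> (nat \<Rightarrow> 'q) \<Rightarrow> (nat \<Rightarrow> 's) \<Rightarrow> bool" where
  "trans_enabled A B n p tr s e \<longleftrightarrow>
     (case tr of (q, \<sigma>, g, q') \<Rightarrow>
        tr \<in> delta (tmpl A B p) \<and> s p = q \<and> e p = \<sigma> \<and> guard_sat n g p s)"

definition proc_enabled ::
  "('q, 's) template \<Rightarrow> ('q, 's) template \<Rightarrow> nat \<Rightarrow> nat \<Rightarrow> (nat \<Rightarrow> 'q) \<Rightarrow> (nat \<Rightarrow> 's) \<Rightarrow> bool" where
  "proc_enabled A B n p s e \<longleftrightarrow> (\<exists>tr. trans_enabled A B n p tr s e)"

definition valid_input :: "('q, 's) template \<Rightarrow> ('q, 's) template \<Rightarrow> nat \<Rightarrow> (nat \<Rightarrow> 's) \<Rightarrow> bool" where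
  "valid_input A B n e \<longleftrightarrow> (\<forall>p\<in>procs n. e p \<in> alpha (tmpl A B p))"

definition initial_state :: "('q, 's) template \<Rightarrow> ('q, 's) template \<Rightarrow> nat \<Rightarrow> (nat \<Rightarrow> 'q) \<Rightarrow> bool" where
  "initial_state A B n s \<longleftrightarrow> (\<forall>p\<in>procs n. s p = init (tmpl A B p))"

definition gstep ::
  "('q, 's) template \<Rightarrow> ('q, 's) template \<Rightarrow> nat \<Rightarrow> (nat \<Rightarrow> 'q) \<Rightarrow> (nat \<Rightarrow> 's) \<Rightarrow> nat
     \<Rightarrow> (nat \<Rightarrow> 'q) \<Rightarrow> bool" where
  "gstep A B n s e p s' \<longleftrightarrow> p \<in> procs n \<and>
     (\<exists>q \<sigma> g q'. trans_enabled A B n p (q, \<sigma>, g, q') s e \<and> s' = s(p := q'))"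

definition path_step ::
  "('q, 's) template \<Rightarrow> ('q, 's) template \<Rightarrow> nat \<Rightarrow> (nat \<Rightarrow> nat \<Rightarrow> 'q) \<Rightarrow> (nat \<Rightarrow> nat \<Rightarrow> 's)
     \<Rightarrow> nat \<Rightarrow> nat \<Rightarrow> bool" where
  "path_step A B n S E t p \<longleftrightarrow> gstep A B n (S t) (E t) p (S (Suc t)) \<and>
     (\<forall>p'\<in>procs n. p' \<noteq> p \<longrightarrow> E (Suc t) p' = E t p')"

text \<open>Finite (hence globally deadlocked) run: configurations 0..k, the configurations
  0..k-1 are (S t, E t, P t) with a moving process P t, the last one is (S k, E k, \<bottom>)
  with all processes disabled.\<close>
definition finite_run ::
  "('q, 's) template \<Rightarrow> ('q, 's) template \<Rightarrow> nat \<Rightarrow> (nat \<Rightarrow> nat \<Rightarrow> 'q) \<Rightarrow> (nat \<Rightarrow> nat \<Rightarrow> 's)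
     \<Rightarrow> (nat \<Rightarrow> nat) \<Rightarrow> nat \<Rightarrow> bool" where
  "finite_run A B n S E P k \<longleftrightarrow>
     initial_state A B n (S 0) \<and>
     (\<forall>t\<le>k. valid_input A B n (E t)) \<and>
     (\<forall>t<k. path_step A B n S E t (P t)) \<and>
     (\<forall>p\<in>procs n. \<not> proc_enabled A B n p (S k) (E k))"

definition infinite_run ::
  "('q, 's) template \<Rightarrow> ('q, 's) template \<Rightarrow> nat \<Rightarrow> (nat \<Rightarrow> nat \<Rightarrow> 'q) \<Rightarrow> (nat \<Rightarrow> nat \<Rightarrow> 's)
     \<Rightarrow> (nat \<Rightarrow> nat) \<Rightarrow> bool" where
  "infinite_run A B n S E P \<longleftrightarrow>
     initial_state A B n (S 0) \<and>
     (\<forall>t. valid_input A B n (E t)) \<and>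
     (\<forall>t. path_step A B n S E t (P t))"

definition locally_deadlocked ::
  "('q, 's) template \<Rightarrow> ('q, 's) template \<Rightarrow> nat \<Rightarrow> (nat \<Rightarrow> nat \<Rightarrow> 'q) \<Rightarrow> (nat \<Rightarrow> nat \<Rightarrow> 's) \<Rightarrow> bool" where
  "locally_deadlocked A B n S E \<longleftrightarrow>
     (\<exists>p\<in>procs n. \<exists>t0. \<forall>t\<ge>t0. \<not> proc_enabled A B n p (S t) (E t))"

definition has_deadlock :: "('q, 's) template \<Rightarrow> ('q, 's) template \<Rightarrow> nat \<Rightarrow> bool" where
  "has_deadlock A B n \<longleftrightarrow>
     (\<exists>S E P k. finite_run A B n S E P k) \<or>
     (\<exists>S E P. infinite_run A B n S E P \<and> locally_deadlocked A B n S E)"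

end

theory Submission
  imports Defs
begin

text \<open>
  The new copy \<open>B\<^sub>n\<^sub>+\<^sub>1\<close> is parked in \<open>init B\<close>, which every guard contains, so every step
  of \<open>(A,B)\<^bsup>(1,n)\<^esup>\<close> is still a step of \<open>(A,B)\<^bsup>(1,n+1)\<^esup>\<close>. Conversely, an additional
  process only strengthens conjunctive guards, so no old process becomes enabled, wherever
  \<open>B\<^sub>n\<^sub>+\<^sub>1\<close> is. A local deadlock is thus preserved verbatim. After a global deadlock only
  \<open>B\<^sub>n\<^sub>+\<^sub>1\<close> may still move; letting it run alone against the frozen other processes, it either
  gets stuck (a global deadlock) or runs forever while all others stay disabled (a local
  deadlock). The hypothesis \<open>n \<ge> 1\<close> only provides an input letter for \<open>B\<^sub>n\<^sub>+\<^sub>1\<close>.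
\<close>

lemma init_B_in_guard:
  assumes "conj_system_type A B" "(q, \<sigma>, g, q') \<in> delta (tmpl A B p)"
  shows "init B \<in> g"
  using assms unfolding conj_system_type_def tmpl_def by (auto split: if_splits)

lemma trans_enabled_Suc_iff:
  assumes "p \<le> n"
  shows "trans_enabled A B (Suc n) p (q, \<sigma>, g, q') (s(Suc n := x)) (e(Suc n := y))
    \<longleftrightarrow> trans_enabled A B n p (q, \<sigma>, g, q') s e \<and> x \<in> g"
  using assms unfolding trans_enabled_def guard_sat_def procs_def by (auto simp: le_Suc_eq)

lemma trans_enabled_last_iff:
  "trans_enabled A B (Suc n) (Suc n) (q, \<sigma>, g, q') (s(Suc n := x)) (e(Suc n := y))
    \<longleftrightarrow> (q, \<sigma>, g, q') \<in> delta B \<and> q = x \<and> \<sigma> = y \<and> (\<forall>p\<in>procs n. s p \<in> g)"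
  unfolding trans_enabled_def guard_sat_def procs_def tmpl_def by (auto simp: le_Suc_eq)

lemma proc_enabled_SucD:
  assumes "p \<le> n" "proc_enabled A B (Suc n) p (s(Suc n := x)) (e(Suc n := y))"
  shows "proc_enabled A B n p s e"
proof -
  obtain q \<sigma> g q' where "trans_enabled A B (Suc n) p (q, \<sigma>, g, q') (s(Suc n := x)) (e(Suc n := y))"
    using assms(2) unfolding proc_enabled_def by (metis prod_cases4)
  then show ?thesis
    unfolding proc_enabled_def trans_enabled_Suc_iff[OF assms(1)] by blast
qed

lemma gstep_Suc:
  assumes "conj_system_type A B" "gstep A B n s e p s'"
  shows "gstep A B (Suc n) (s(Suc n := init B)) (e(Suc n := y)) p (s'(Suc n := init B))"
proof -
  obtain q \<sigma> g q' where p: "p \<in> procs n" and tr: "trans_enabled A B n p (q, \<sigma>, g, q') s e"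
    and s': "s' = s(p := q')"
    using assms(2) unfolding gstep_def by blast
  have p_le: "p \<le> n" using p by (simp add: procs_def)
  have "init B \<in> g"
    using tr by (auto simp: trans_enabled_def dest: init_B_in_guard[OF assms(1)])
  then have "trans_enabled A B (Suc n) p (q, \<sigma>, g, q') (s(Suc n := init B)) (e(Suc n := y))"
    unfolding trans_enabled_Suc_iff[OF p_le] using tr by blast
  moreover have "s'(Suc n := init B) = (s(Suc n := init B))(p := q')"
    using s' p_le by (auto simp: fun_eq_iff)
  moreover have "p \<in> procs (Suc n)" using p_le by (simp add: procs_def)
  ultimately show ?thesis unfolding gstep_def by (intro conjI exI)
qed

lemma path_step_Suc:
  assumes "conj_system_type A B" "path_step A B n S E t p"
    and "S' t = (S t)(Suc n := init B)" "S' (Suc t) = (S (Suc t))(Suc n := init B)"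
    and "E' t = (E t)(Suc n := y)" "E' (Suc t) = (E (Suc t))(Suc n := y)"
  shows "path_step A B (Suc n) S' E' t p"
proof -
  have "gstep A B n (S t) (E t) p (S (Suc t))"
    and keep: "\<forall>p'\<in>procs n. p' \<noteq> p \<longrightarrow> E (Suc t) p' = E t p'"
    using assms(2) by (auto simp: path_step_def)
  then have "gstep A B (Suc n) (S' t) (E' t) p (S' (Suc t))"
    using gstep_Suc[OF assms(1)] assms(3-5) by metis
  moreover have "\<forall>p'\<in>procs (Suc n). p' \<noteq> p \<longrightarrow> E' (Suc t) p' = E' t p'"
    using keep assms(5,6) by (auto simp: procs_def)
  ultimately show ?thesis by (simp add: path_step_def)
qed

lemma valid_input_Suc:
  "valid_input A B n e \<Longrightarrow> y \<in> alpha B \<Longrightarrow> valid_input A B (Suc n) (e(Suc n := y))"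
  by (auto simp: valid_input_def procs_def tmpl_def)

lemma initial_state_Suc:
  "initial_state A B n s \<Longrightarrow> initial_state A B (Suc n) (s(Suc n := init B))"
  by (auto simp: initial_state_def procs_def tmpl_def)

lemma infinite_run_Suc:
  assumes "conj_system_type A B" "infinite_run A B n S E P" "y \<in> alpha B"
  shows "infinite_run A B (Suc n) (\<lambda>t. (S t)(Suc n := init B)) (\<lambda>t. (E t)(Suc n := y)) P"
  unfolding infinite_run_def
proof (intro conjI allI)
  show "initial_state A B (Suc n) ((S 0)(Suc n := init B))"
    using assms(2) initial_state_Suc unfolding infinite_run_def by blast
next
  fix t
  have valid: "valid_input A B n (E t)" and step: "path_step A B n S E t (P t)"
    using assms(2) unfolding infinite_run_def by blast+
  from valid assms(3) show "valid_input A B (Suc n) ((E t)(Suc n := y))"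
    by (rule valid_input_Suc)
  from step show "path_step A B (Suc n) (\<lambda>t. (S t)(Suc n := init B)) (\<lambda>t. (E t)(Suc n := y)) t (P t)"
    by (rule path_step_Suc[OF assms(1)]) simp_all
qed

lemma locally_deadlocked_Suc:
  assumes "locally_deadlocked A B n S E"
  shows "locally_deadlocked A B (Suc n) (\<lambda>t. (S t)(Suc n := X t)) (\<lambda>t. (E t)(Suc n := Y t))"
proof -
  obtain p t\<^sub>0 where p: "p \<in> procs n"
    and disabled: "\<And>t. t \<ge> t\<^sub>0 \<Longrightarrow> \<not> proc_enabled A B n p (S t) (E t)"
    using assms unfolding locally_deadlocked_def by blast
  have p_le: "p \<le> n" using p by (simp add: procs_def)
  have "\<not> proc_enabled A B (Suc n) p ((S t)(Suc n := X t)) ((E t)(Suc n := Y t))"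
    if "t \<ge> t\<^sub>0" for t
    using disabled[OF that] proc_enabled_SucD[OF p_le] by metis
  moreover have "p \<in> procs (Suc n)" using p by (simp add: procs_def)
  ultimately show ?thesis unfolding locally_deadlocked_def by blast
qed

lemma has_deadlock_alpha_nonempty:
  assumes "n \<ge> 1" "has_deadlock A B n"
  shows "\<exists>\<sigma>. \<sigma> \<in> alpha B"
proof -
  obtain E where "valid_input A B n (E 0)"
    using assms(2) unfolding has_deadlock_def finite_run_def infinite_run_def by auto
  moreover have "1 \<in> procs n" using assms(1) by (simp add: procs_def)
  ultimately have "E 0 1 \<in> alpha (tmpl A B 1)" unfolding valid_input_def by blast
  then show ?thesis by (auto simp: tmpl_def)
qed

lemma maximal_path_exists:
  fixes R :: "'a \<Rightarrow> 'b \<Rightarrow> 'a \<Rightarrow> bool"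
  obtains (infinite) X Y where "X 0 = x" "\<And>i. R (X i) (Y i) (X (Suc i))"
  | (finite) X Y m where "X 0 = x" "\<And>i. i < m \<Longrightarrow> R (X i) (Y i) (X (Suc i))"
      "\<And>y x'. \<not> R (X m) y x'"
proof -
  define step where "step z = (SOME (y, z'). R z y z')" for z
  define X where "X i = ((snd \<circ> step) ^^ i) x" for i
  define Y where "Y i = fst (step (X i))" for i
  have X0: "X 0 = x" by (simp add: X_def)
  have R_step: "R (X i) (Y i) (X (Suc i))" if "\<exists>y x'. R (X i) y x'" for i
  proof -
    from that have "\<exists>yx. case yx of (y, x') \<Rightarrow> R (X i) y x'" by auto
    then have "case step (X i) of (y, x') \<Rightarrow> R (X i) y x'"
      unfolding step_def by (rule someI_ex)
    then show ?thesis by (simp add: X_def Y_def split: prod.splits)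
  qed
  show thesis
  proof (cases "\<forall>i. \<exists>y x'. R (X i) y x'")
    case True
    then show thesis using infinite X0 R_step by blast
  next
    case False
    define m where "m = (LEAST i. \<not> (\<exists>y x'. R (X i) y x'))"
    have "\<exists>i. \<not> (\<exists>y x'. R (X i) y x')" using False by blast
    then have "\<not> (\<exists>y x'. R (X m) y x')" unfolding m_def by (rule LeastI_ex)
    moreover have "R (X i) (Y i) (X (Suc i))" if "i < m" for i
      using not_less_Least[OF that[unfolded m_def]] R_step by blast
    ultimately show thesis using finite X0 by blast
  qed
qed

definition solo_step :: "('q, 's) template \<Rightarrow> (nat \<Rightarrow> 'q) \<Rightarrow> nat \<Rightarrow> 'q \<Rightarrow> 's \<Rightarrow> 'q \<Rightarrow> bool" where
  "solo_step B s n x \<sigma> x' \<longleftrightarrow> (\<exists>g. (x, \<sigma>, g, x') \<in> delta B \<and> (\<forall>p\<in>procs n. s p \<in> g))"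

lemma solo_step_input:
  assumes "conj_system_type A B" "solo_step B s n x \<sigma> x'"
  shows "\<sigma> \<in> alpha B"
  using assms unfolding conj_system_type_def wf_template_def solo_step_def by blast

lemma solo_step_of_proc_enabled:
  assumes "proc_enabled A B (Suc n) (Suc n) (s(Suc n := x)) (e(Suc n := y))"
  shows "\<exists>\<sigma> x'. solo_step B s n x \<sigma> x'"
proof -
  obtain q \<sigma> g q' where "trans_enabled A B (Suc n) (Suc n) (q, \<sigma>, g, q') (s(Suc n := x)) (e(Suc n := y))"
    using assms unfolding proc_enabled_def by (metis prod_cases4)
  then show ?thesis
    unfolding trans_enabled_last_iff solo_step_def by blast
qed

lemma path_step_solo:
  assumes "solo_step B s n x \<sigma> x'"
    and "S' t = s(Suc n := x)" "S' (Suc t) = s(Suc n := x')"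
    and "E' t = e(Suc n := \<sigma>)" "E' (Suc t) = e(Suc n := \<sigma>')"
  shows "path_step A B (Suc n) S' E' t (Suc n)"
proof -
  obtain g where "(x, \<sigma>, g, x') \<in> delta B" "\<forall>p\<in>procs n. s p \<in> g"
    using assms(1) unfolding solo_step_def by blast
  then have "trans_enabled A B (Suc n) (Suc n) (x, \<sigma>, g, x') (S' t) (E' t)"
    unfolding assms(2,4) trans_enabled_last_iff by blast
  moreover have "S' (Suc t) = (S' t)(Suc n := x')" using assms(2,3) by simp
  moreover have "Suc n \<in> procs (Suc n)" by (simp add: procs_def)
  ultimately have "gstep A B (Suc n) (S' t) (E' t) (Suc n) (S' (Suc t))"
    unfolding gstep_def by (intro conjI exI)
  moreover have "\<forall>p'\<in>procs (Suc n). p' \<noteq> Suc n \<longrightarrow> E' (Suc t) p' = E' t p'"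
    using assms(4,5) by simp
  ultimately show ?thesis unfolding path_step_def by blast
qed

text \<open>Processes \<open>0..n\<close> follow \<open>S\<close> up to time \<open>k\<close> and then stay put, while \<open>B\<^sub>n\<^sub>+\<^sub>1\<close> rests
  in \<open>X 0\<close> up to time \<open>k\<close> and then follows \<open>X\<close>; used for states and inputs alike.\<close>
definition solo_extension :: "(nat \<Rightarrow> nat \<Rightarrow> 'a) \<Rightarrow> nat \<Rightarrow> nat \<Rightarrow> (nat \<Rightarrow> 'a) \<Rightarrow> nat \<Rightarrow> nat \<Rightarrow> 'a" where
  "solo_extension S k n X t = (S (min t k))(Suc n := X (t - k))"

lemma solo_extension_path_step:
  assumes "conj_system_type A B" "finite_run A B n S E P k" "X 0 = init B"
    and "t < k \<or> solo_step B (S k) n (X (t - k)) (Y (t - k)) (X (Suc (t - k)))"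
  shows "path_step A B (Suc n) (solo_extension S k n X) (solo_extension E k n Y) t
    (if t < k then P t else Suc n)"
proof (cases "t < k")
  case True
  then have "path_step A B n S E t (P t)"
    using assms(2) unfolding finite_run_def by blast
  then show ?thesis
    using True by (simp add: path_step_Suc[OF assms(1)] solo_extension_def assms(3))
next
  case False
  then have "Suc t - k = Suc (t - k)" by simp
  with False assms(4) show ?thesis
    by (auto intro: path_step_solo simp: solo_extension_def)
qed

lemma solo_extension_old_disabled:
  assumes "finite_run A B n S E P k" "p \<le> n" "k \<le> t"
  shows "\<not> proc_enabled A B (Suc n) p (solo_extension S k n X t) (solo_extension E k n Y t)"
proof
  assume "proc_enabled A B (Suc n) p (solo_extension S k n X t) (solo_extension E k n Y t)"
  then have "proc_enabled A B n p (S k) (E k)"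
    using assms(3) proc_enabled_SucD[OF assms(2)] by (simp add: solo_extension_def)
  with assms(1,2) show False
    unfolding finite_run_def procs_def by auto
qed

lemma has_deadlock_of_infinite_solo_run:
  assumes "conj_system_type A B" "finite_run A B n S E P k" "X 0 = init B"
    and "\<And>i. solo_step B (S k) n (X i) (Y i) (X (Suc i))"
  shows "has_deadlock A B (Suc n)"
proof -
  let ?S = "solo_extension S k n X" and ?E = "solo_extension E k n Y"
  have "initial_state A B (Suc n) (?S 0)"
    using assms(2) by (simp add: finite_run_def solo_extension_def assms(3) initial_state_Suc)
  moreover have "valid_input A B (Suc n) (?E t)" for t
  proof -
    have "valid_input A B n (E (min t k))"
      using assms(2) unfolding finite_run_def by simp
    then show ?thesis
      unfolding solo_extension_def using solo_step_input[OF assms(1,4)] by (rule valid_input_Suc)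
  qed
  moreover have "path_step A B (Suc n) ?S ?E t (if t < k then P t else Suc n)" for t
    using solo_extension_path_step[where X = X, OF assms(1-3)] assms(4) by blast
  ultimately have "infinite_run A B (Suc n) ?S ?E (\<lambda>t. if t < k then P t else Suc n)"
    unfolding infinite_run_def by blast
  moreover have "locally_deadlocked A B (Suc n) ?S ?E"
    using solo_extension_old_disabled[OF assms(2)]
    unfolding locally_deadlocked_def procs_def by fastforce
  ultimately show ?thesis
    unfolding has_deadlock_def by blast
qed

lemma has_deadlock_of_stuck_solo_run:
  assumes "conj_system_type A B" "finite_run A B n S E P k" "X 0 = init B"
    and "\<And>i. i < m \<Longrightarrow> solo_step B (S k) n (X i) (Y i) (X (Suc i))"
    and "\<And>\<sigma> x'. \<not> solo_step B (S k) n (X m) \<sigma> x'"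
    and "Y m \<in> alpha B"
  shows "has_deadlock A B (Suc n)"
proof -
  let ?S = "solo_extension S k n X" and ?E = "solo_extension E k n Y"
  have "initial_state A B (Suc n) (?S 0)"
    using assms(2) by (simp add: finite_run_def solo_extension_def assms(3) initial_state_Suc)
  moreover have "valid_input A B (Suc n) (?E t)" if "t \<le> k + m" for t
  proof -
    have "valid_input A B n (E (min t k))"
      using assms(2) unfolding finite_run_def by simp
    moreover have "t - k \<le> m" using that by simp
    then have "Y (t - k) \<in> alpha B"
      by (cases "t - k = m") (simp_all add: assms(6) solo_step_input[OF assms(1,4)])
    ultimately show ?thesis
      unfolding solo_extension_def by (rule valid_input_Suc)
  qed
  moreover have "path_step A B (Suc n) ?S ?E t (if t < k then P t else Suc n)" if "t < k + m" for t
  proof -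
    have "t < k \<or> solo_step B (S k) n (X (t - k)) (Y (t - k)) (X (Suc (t - k)))"
      using that assms(4)[of "t - k"] by (cases "t < k") auto
    then show ?thesis by (rule solo_extension_path_step[where X = X, OF assms(1-3)])
  qed
  moreover have "\<not> proc_enabled A B (Suc n) p (?S (k + m)) (?E (k + m))"
    if "p \<in> procs (Suc n)" for p
  proof (cases "p \<le> n")
    case True
    then show ?thesis by (rule solo_extension_old_disabled[OF assms(2)]) simp
  next
    case False
    with that have "p = Suc n" by (simp add: procs_def)
    show ?thesis
    proof
      assume "proc_enabled A B (Suc n) p (?S (k + m)) (?E (k + m))"
      then have "proc_enabled A B (Suc n) (Suc n) ((S k)(Suc n := X m)) ((E k)(Suc n := Y m))"
        using \<open>p = Suc n\<close> by (simp add: solo_extension_def)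
      then have "\<exists>\<sigma> x'. solo_step B (S k) n (X m) \<sigma> x'"
        by (rule solo_step_of_proc_enabled)
      with assms(5) show False by blast
    qed
  qed
  ultimately have "finite_run A B (Suc n) ?S ?E (\<lambda>t. if t < k then P t else Suc n) (k + m)"
    unfolding finite_run_def by blast
  then show ?thesis
    unfolding has_deadlock_def by blast
qed

lemma has_deadlock_Suc_of_finite_run:
  assumes "conj_system_type A B" "finite_run A B n S E P k" "\<sigma> \<in> alpha B"
  shows "has_deadlock A B (Suc n)"
proof (cases rule: maximal_path_exists[where R = "solo_step B (S k) n" and x = "init B"])
  case (infinite X Y)
  then show ?thesis by (rule has_deadlock_of_infinite_solo_run[OF assms(1,2)])
next
  case (finite X Y m)
  define Y' where "Y' = Y(m := \<sigma>)"
  have "\<And>i. i < m \<Longrightarrow> solo_step B (S k) n (X i) (Y' i) (X (Suc i))"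
    using finite(2) by (simp add: Y'_def)
  moreover have "Y' m \<in> alpha B"
    using assms(3) by (simp add: Y'_def)
  ultimately show ?thesis
    by (rule has_deadlock_of_stuck_solo_run[where X = X, OF assms(1,2) finite(1) _ finite(3)])
qed

theorem mainTheorem14:
  fixes A B :: "('q, 's) template" and n :: nat
  assumes "conj_system_type A B"
    and "n \<ge> 1"
    and "has_deadlock A B n"
  shows "has_deadlock A B (Suc n)"
proof -
  obtain \<sigma> where \<sigma>: "\<sigma> \<in> alpha B"
    using has_deadlock_alpha_nonempty[OF assms(2,3)] by blast
  from assms(3) consider (global) S E P k where "finite_run A B n S E P k"
    | (local) S E P where "infinite_run A B n S E P" "locally_deadlocked A B n S E"
    unfolding has_deadlock_def by blast
  then show ?thesis
  proof cases
    case global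
    with assms(1) \<sigma> show ?thesis by (intro has_deadlock_Suc_of_finite_run)
  next
    case local
    have "infinite_run A B (Suc n) (\<lambda>t. (S t)(Suc n := init B)) (\<lambda>t. (E t)(Suc n := \<sigma>)) P"
      using assms(1) local(1) \<sigma> by (rule infinite_run_Suc)
    moreover have "locally_deadlocked A B (Suc n) (\<lambda>t. (S t)(Suc n := init B)) (\<lambda>t. (E t)(Suc n := \<sigma>))"
      using local(2) by (rule locally_deadlocked_Suc)
    ultimately show ?thesis
      unfolding has_deadlock_def by blast
  qed
qed

end
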